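(* Let $X$ and $Y$ be Hausdorff topological spaces and let $\varphi: Y \to X$ be continuous. Let $Z = Y \dot\cup_\varphi X$ be the set-theoretic disjoint union of $X$ and $Y$ with the topology generated by the base consisting of (a) all open subsets of $Y$, and (b) all sets of the form $[U,K] := U \cup (\varphi^{-1}(U) \setminus K)$, where $U$ is open in $X$ and $K$ is a compact subset of $Y$. Then: \begin{enumerate} \item $X$ is closed in $Z$, $Y$ is open in $Z$, and both $X$ and $Y$ inherit their original topologies as subspaces of $Z$. \item If $Y$ is locally compact, then $Z$ is Hausdorff. \item If $X$ is compact, then $Z$ is compact. \item If $X$ and $Y$ are first countable, $X$ is compact, $Y$ is locally compact, and $\varphi^{-1}(x)$ is compact for each $x \in X$, then $Z$ is first countable. \item If $X$ and $Y$ are zero-dimensional, $X$ is compact, and $Y$ is locally compact, then $Z$ is zero-dimensional. \item If $X$ is second countable and $Y^\omega$ is hereditarily separable, then $Z^\omega$ is hereditarily separable. \end{enumerate}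
   Context: A space is hereditarily separable if every subspace of it is separable. $Y^\omega$ and $Z^\omega$ denote countable Tychonoff powers. *)

theory Defs
  imports "HOL-Analysis.Analysis"
begin

definition bracket_set :: "'b topology \<Rightarrow> ('b \<Rightarrow> 'a) \<Rightarrow> 'a set \<Rightarrow> 'b set \<Rightarrow> ('b + 'a) set"
  where "bracket_set Y phi U K = Inr ` U \<union> Inl ` ({y \<in> topspace Y. phi y \<in> U} - K)"

definition adj_space :: "'b topology \<Rightarrow> 'a topology \<Rightarrow> ('b \<Rightarrow> 'a) \<Rightarrow> ('b + 'a) topology"
  where "adj_space Y X phi = topology_generated_by
     ({Inl ` V | V. openin Y V} \<union>
      {bracket_set Y phi U K | U K. openin X U \<and> compactin Y K})"

definition hereditarily_separable :: "'a topology \<Rightarrow> bool"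
  where "hereditarily_separable T \<longleftrightarrow>
           (\<forall>S. S \<subseteq> topspace T \<longrightarrow> separable_space (subtopology T S))"

abbreviation countable_power :: "'a topology \<Rightarrow> (nat \<Rightarrow> 'a) topology"
  where "countable_power T \<equiv> product_topology (\<lambda>_. T) UNIV"

end

(*
  Everything rests on one observation: an open set of Z containing Inr x contains a basic set
  [U,K] with x \<in> U, because finite intersections of basic sets are again basic.

  Compactness: a basic set [U,K] misses only the compact part K of Y over U, so an open set
  containing the compact X misses only a compact part of Y, which is covered by finitely many
  further sets.  First countability: if the fibre over x lies in an open V contained in a compact
  L, every [U,K] around Inr x contains some [U',L] with U' = U - phi(K - V), so the sets [U',L]
  with U' in a countable base at x form a countable base at Inr x.  Zero-dimensionality: [C,K]
  is clopen when C is clopen in X and K is compact and open in Y, and compact open sets form a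
  base of a zero-dimensional locally compact space.

  Hereditary separability: Z is the union of continuous images of Y and of X.  A subset S of
  Z^\<omega> is cut into countably many slices, according to a bound n, the set A of coordinates
  below n lying in the image of Y, and basic open sets of X for the other coordinates below n.
  Mapping a slice into Y^\<omega> through its A-coordinates, hereditary separability gives a
  countable set dense with respect to these coordinates, and the union over all slices is dense
  in S.
*)
theory Submission
  imports Defs
begin

section \<open>Compact open sets in zero-dimensional spaces\<close>

lemma dimension_le_0_clopen_neighbourhood:
  assumes "X dim_le 0" and "openin X W" and "x \<in> W"
  obtains C where "closedin X C" "openin X C" "x \<in> C" "C \<subseteq> W"
proof -
  have "neighbourhood_base_of (\<lambda>C. closedin X C \<and> openin X C) X"
    using assms(1) by (simp add: dimension_le_0_neighbourhood_base_of_clopen)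
  with assms(2,3) obtain C where "closedin X C" "openin X C" "x \<in> C" "C \<subseteq> W"
    unfolding neighbourhood_base_of by (metis subsetD)
  then show thesis
    using that by blast
qed

lemma locally_compact_dim_le_0_compact_open_neighbourhood:
  assumes "locally_compact_space Y" and "Y dim_le 0" and "openin Y W" and "y \<in> W"
  obtains C where "openin Y C" "compactin Y C" "y \<in> C" "C \<subseteq> W"
proof -
  have "y \<in> topspace Y"
    using assms(3,4) openin_subset by blast
  then obtain U K where U: "openin Y U" and K: "compactin Y K" and "y \<in> U" "U \<subseteq> K"
    using assms(1) unfolding locally_compact_space_def by blast
  have "openin Y (W \<inter> U)" "y \<in> W \<inter> U"
    using assms(3,4) U \<open>y \<in> U\<close> by auto
  from dimension_le_0_clopen_neighbourhood[OF assms(2) this]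
  obtain C where "closedin Y C" "openin Y C" "y \<in> C" "C \<subseteq> W \<inter> U"
    by blast
  moreover have "compactin Y C"
    using closed_compactin[OF K] \<open>closedin Y C\<close> \<open>C \<subseteq> W \<inter> U\<close> \<open>U \<subseteq> K\<close> by blast
  ultimately show thesis
    using that by blast
qed

lemma locally_compact_dim_le_0_compactin_subset_compact_open:
  assumes "locally_compact_space Y" and "Y dim_le 0" and "compactin Y K"
  obtains C where "openin Y C" "compactin Y C" "K \<subseteq> C"
proof -
  have "\<exists>C. openin Y C \<and> compactin Y C \<and> y \<in> C" if "y \<in> K" for y
    using locally_compact_dim_le_0_compact_open_neighbourhood[OF assms(1,2) openin_topspace]
      compactin_subset_topspace[OF assms(3)] that by blast
  then obtain C where C: "\<And>y. y \<in> K \<Longrightarrow> openin Y (C y) \<and> compactin Y (C y) \<and> y \<in> C y"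
    by metis
  then obtain \<V> where "finite \<V>" "\<V> \<subseteq> C ` K" "K \<subseteq> \<Union>\<V>"
    using compactinD[OF assms(3), of "C ` K"] by blast
  show thesis
  proof (rule that)
    show "openin Y (\<Union>\<V>)" "compactin Y (\<Union>\<V>)"
      using \<open>finite \<V>\<close> \<open>\<V> \<subseteq> C ` K\<close> C by (auto intro!: compactin_Union)
  qed (fact \<open>K \<subseteq> \<Union>\<V>\<close>)
qed

section \<open>Hereditary separability of countable powers\<close>

lemma separable_space_subtopologyI:
  assumes "countable D" and "D \<subseteq> S"
    and "\<And>s W. s \<in> S \<Longrightarrow> openin T W \<Longrightarrow> s \<in> W \<Longrightarrow> D \<inter> W \<noteq> {}"
  shows "separable_space (subtopology T S)"
  unfolding separable_space_def
proof (intro exI conjI)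
  have "s \<in> T closure_of (D \<inter> topspace T)" if "s \<in> topspace T" "s \<in> S" for s
    unfolding in_closure_of using that assms(3) openin_subset by fastforce
  then have "topspace (subtopology T S) \<subseteq> subtopology T S closure_of (D \<inter> topspace T)"
    using assms(2) by (simp add: closure_of_subtopology Int_absorb1 inf.absorb2 subset_iff)
  then show "subtopology T S closure_of (D \<inter> topspace T) = topspace (subtopology T S)"
    by (rule subset_antisym[OF closure_of_subset_topspace])
qed (use assms in auto)

lemma hereditarily_separable_countable_dense_image:
  assumes "hereditarily_separable T" and "h ` S \<subseteq> topspace T"
  obtains D where "countable D" "D \<subseteq> S"
    "\<And>s W. s \<in> S \<Longrightarrow> openin T W \<Longrightarrow> h s \<in> W \<Longrightarrow> \<exists>d\<in>D. h d \<in> W"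
proof -
  have "separable_space (subtopology T (h ` S))"
    using assms unfolding hereditarily_separable_def by blast
  then obtain C where "countable C" "C \<subseteq> h ` S" and dense: "subtopology T (h ` S) closure_of C = h ` S"
    unfolding separable_space_def topspace_subtopology_subset[OF assms(2)] by blast
  show thesis
  proof
    show "countable (inv_into S h ` C)" using \<open>countable C\<close> by simp
    show "inv_into S h ` C \<subseteq> S" using \<open>C \<subseteq> h ` S\<close> by (auto intro: inv_into_into)
    fix s W assume "s \<in> S" "openin T W" "h s \<in> W"
    then have "h s \<in> T closure_of C"
      using dense \<open>s \<in> S\<close> closure_of_subtopology_subset by fastforce
    then obtain c where "c \<in> C" "c \<in> W"
      using \<open>openin T W\<close> \<open>h s \<in> W\<close> by (auto simp: in_closure_of)
    then show "\<exists>d\<in>inv_into S h ` C. h d \<in> W"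
      using \<open>C \<subseteq> h ` S\<close> by (intro bexI[of _ "inv_into S h c"]) (auto simp: f_inv_into_f)
  qed
qed

definition coordinatewise_dense ::
    "'c topology \<Rightarrow> nat set \<Rightarrow> (nat \<Rightarrow> 'c) set \<Rightarrow> (nat \<Rightarrow> 'c) set \<Rightarrow> bool"
  where "coordinatewise_dense Z A S D \<longleftrightarrow>
    (\<forall>s\<in>S. \<forall>U. (\<forall>i\<in>A. openin Z (U i) \<and> s i \<in> U i) \<longrightarrow> (\<exists>d\<in>D. \<forall>i\<in>A. d i \<in> U i))"

lemma hereditarily_separable_power_coordinatewise_dense:
  fixes f :: "'b \<Rightarrow> 'c" and S :: "(nat \<Rightarrow> 'c) set"
  assumes hs: "hereditarily_separable (countable_power Y)"
    and f: "continuous_map Y Z f" and "finite A"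
    and S: "\<And>s i. s \<in> S \<Longrightarrow> i \<in> A \<Longrightarrow> s i \<in> f ` topspace Y"
  shows "\<exists>D. countable D \<and> D \<subseteq> S \<and> coordinatewise_dense Z A S D"
proof (cases "A = {}")
  case True
  then show ?thesis
    by (intro exI[of _ "S \<inter> {SOME s. s \<in> S}"]) (auto simp: coordinatewise_dense_def some_in_eq)
next
  case False
  then obtain a where "a \<in> A" by blast
  \<comment> \<open>coordinates outside \<open>A\<close> repeat coordinate \<open>a\<close>, so that \<open>h s\<close> is a point of \<open>Y\<^sup>\<omega>\<close>\<close>
  define h where "h s = (\<lambda>i. inv_into (topspace Y) f (s (if i \<in> A then i else a)))" for s
  have idx: "(if i \<in> A then i else a) \<in> A" for i
    using \<open>a \<in> A\<close> by simp
  have h_in: "h s i \<in> topspace Y" if "s \<in> S" for s i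
    unfolding h_def using S[OF that idx] by (rule inv_into_into)
  have f_h: "f (h s i) = s (if i \<in> A then i else a)" if "s \<in> S" for s i
    unfolding h_def using S[OF that idx] by (rule f_inv_into_f)
  have hS: "h ` S \<subseteq> topspace (countable_power Y)"
    using h_in by (simp add: PiE_UNIV_domain image_subset_iff)
  obtain D where D: "countable D" "D \<subseteq> S"
    and dense: "\<And>s W. s \<in> S \<Longrightarrow> openin (countable_power Y) W \<Longrightarrow> h s \<in> W \<Longrightarrow> \<exists>d\<in>D. h d \<in> W"
    using hereditarily_separable_countable_dense_image[OF hs hS] by blast
  have "coordinatewise_dense Z A S D"
    unfolding coordinatewise_dense_def
  proof (intro ballI allI impI)
    fix s U assume "s \<in> S" and U: "\<forall>i\<in>A. openin Z (U i) \<and> s i \<in> U i"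
    define W where "W = (\<Pi>\<^sub>E i\<in>UNIV. if i \<in> A then {y \<in> topspace Y. f y \<in> U i} else topspace Y)"
    have "openin (countable_power Y) W"
      unfolding W_def using U openin_continuous_map_preimage[OF f]
      by (intro product_topology_basis) (auto intro: finite_subset[OF _ \<open>finite A\<close>])
    moreover have "h s \<in> W"
      using h_in f_h U \<open>s \<in> S\<close> by (auto simp: W_def)
    ultimately obtain d where "d \<in> D" "h d \<in> W"
      using dense \<open>s \<in> S\<close> by blast
    have "d i \<in> U i" if "i \<in> A" for i
    proof -
      have "h d i \<in> (if i \<in> A then {y \<in> topspace Y. f y \<in> U i} else topspace Y)"
        using \<open>h d \<in> W\<close> unfolding W_def by (rule PiE_mem) simp
      moreover have "f (h d i) = d i"
        using f_h \<open>d \<in> D\<close> D(2) that by auto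
      ultimately show ?thesis
        using that by simp
    qed
    then show "\<exists>d\<in>D. \<forall>i\<in>A. d i \<in> U i"
      using \<open>d \<in> D\<close> by blast
  qed
  with D show ?thesis
    by blast
qed

lemma continuous_map_image_base_neighbourhood:
  assumes g: "continuous_map X Z g"
    and base: "\<forall>U x. openin X U \<and> x \<in> U \<longrightarrow> (\<exists>B\<in>\<B>. x \<in> B \<and> B \<subseteq> U)"
    and "openin Z U" and "z \<in> U" and "z \<in> g ` topspace X"
  shows "\<exists>B\<in>\<B>. z \<in> g ` B \<and> g ` B \<subseteq> U"
proof -
  obtain x where x: "x \<in> topspace X" "z = g x"
    using assms(5) by blast
  then have "x \<in> {x \<in> topspace X. g x \<in> U}"
    using assms(4) by simp
  then obtain B where "B \<in> \<B>" "x \<in> B" "B \<subseteq> {x \<in> topspace X. g x \<in> U}"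
    using base openin_continuous_map_preimage[OF g assms(3)] by blast
  then show ?thesis
    using x by blast
qed

lemma countable_power_open_refine_to_slice:
  fixes g :: "'a \<Rightarrow> 'c" and \<B> :: "'a set set"
  assumes g: "continuous_map X Z g"
    and cover: "topspace Z \<subseteq> f ` topspace Y \<union> g ` topspace X"
    and base: "\<forall>U x. openin X U \<and> x \<in> U \<longrightarrow> (\<exists>B\<in>\<B>. x \<in> B \<and> B \<subseteq> U)"
    and "openin (countable_power Z) W" and "s \<in> W"
  obtains n A Bs U where "A \<subseteq> {..<n}" "Bs \<in> ({..<n} - A) \<rightarrow>\<^sub>E \<B>"
    "\<And>i. i \<in> A \<Longrightarrow> s i \<in> f ` topspace Y \<and> openin Z (U i) \<and> s i \<in> U i"
    "\<And>i. i \<in> {..<n} - A \<Longrightarrow> s i \<in> g ` Bs i"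
    "\<And>t. t \<in> topspace (countable_power Z) \<Longrightarrow> (\<And>i. i \<in> A \<Longrightarrow> t i \<in> U i)
       \<Longrightarrow> (\<And>i. i \<in> {..<n} - A \<Longrightarrow> t i \<in> g ` Bs i) \<Longrightarrow> t \<in> W"
proof -
  obtain U where sU: "s \<in> (\<Pi>\<^sub>E i\<in>UNIV. U i)" and U: "\<And>i. openin Z (U i)"
    and "finite {i. U i \<noteq> topspace Z}" and UW: "(\<Pi>\<^sub>E i\<in>UNIV. U i) \<subseteq> W"
    using product_topology_open_contains_basis[OF assms(4,5)] by metis
  then obtain n where n: "\<And>i. n \<le> i \<Longrightarrow> U i = topspace Z"
    by (metis (mono_tags, lifting) finite_nat_set_iff_bounded_le mem_Collect_eq not_less_eq_eq)
  have sUi: "s i \<in> U i" for i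
    using sU by (simp add: PiE_iff)
  define A where "A = {i. i < n \<and> s i \<in> f ` topspace Y}"
  have "\<exists>B\<in>\<B>. s i \<in> g ` B \<and> g ` B \<subseteq> U i" if i: "i \<in> {..<n} - A" for i
  proof (rule continuous_map_image_base_neighbourhood[OF g base U sUi])
    have "s i \<in> topspace Z"
      using sUi U openin_subset by blast
    then show "s i \<in> g ` topspace X"
      using cover i A_def by auto
  qed
  then obtain B where B: "\<And>i. i \<in> {..<n} - A \<Longrightarrow> B i \<in> \<B> \<and> s i \<in> g ` B i \<and> g ` B i \<subseteq> U i"
    by metis
  show thesis
  proof (rule that)
    show "A \<subseteq> {..<n}"
      by (auto simp: A_def)
    show "restrict B ({..<n} - A) \<in> ({..<n} - A) \<rightarrow>\<^sub>E \<B>"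
      using B by auto
    show "s i \<in> f ` topspace Y \<and> openin Z (U i) \<and> s i \<in> U i" if "i \<in> A" for i
      using that sUi U by (auto simp: A_def)
    show "s i \<in> g ` restrict B ({..<n} - A) i" if "i \<in> {..<n} - A" for i
      using B that by simp
    fix t assume t: "t \<in> topspace (countable_power Z)"
      and tA: "\<And>i. i \<in> A \<Longrightarrow> t i \<in> U i"
      and tB: "\<And>i. i \<in> {..<n} - A \<Longrightarrow> t i \<in> g ` restrict B ({..<n} - A) i"
    have "t i \<in> U i" for i
    proof -
      consider "i \<in> A" | "i \<in> {..<n} - A" | "n \<le> i"
        using A_def by fastforce
      then show ?thesis
      proof cases
        case 1
        then show ?thesis using tA by blast
      next
        case 2
        then show ?thesis using tB[OF 2] B[OF 2] by auto
      next
        case 3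
        then show ?thesis using n t by (auto simp: PiE_iff)
      qed
    qed
    then show "t \<in> W"
      using UW by auto
  qed
qed

lemma countable_UN_slices:
  assumes "countable \<B>" and "\<And>n A Bs. A \<subseteq> {..<n} \<Longrightarrow> countable (F n A Bs)"
  shows "countable (\<Union>n::nat. \<Union>A\<in>Pow {..<n}. \<Union>Bs\<in>({..<n} - A) \<rightarrow>\<^sub>E \<B>. F n A Bs)"
proof (rule countable_UN[OF countableI_type], rule countable_UN)
  fix n :: nat
  show "countable (Pow {..<n})"
    by (simp add: countable_finite)
  fix A assume "A \<in> Pow {..<n}"
  moreover have "countable (({..<n} - A) \<rightarrow>\<^sub>E \<B>)"
    using assms(1) by (intro countable_PiE) auto
  ultimately show "countable (\<Union>Bs\<in>({..<n} - A) \<rightarrow>\<^sub>E \<B>. F n A Bs)"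
    using assms(2) by (intro countable_UN) auto
qed

lemma countable_dense_subset_of_power_slices:
  fixes f :: "'b \<Rightarrow> 'c" and g :: "'a \<Rightarrow> 'c" and S :: "(nat \<Rightarrow> 'c) set"
  assumes hs: "hereditarily_separable (countable_power Y)" and f: "continuous_map Y Z f"
    and "countable \<B>"
  obtains D where "countable D" "D \<subseteq> S"
    "\<And>n A Bs s U. A \<subseteq> {..<n} \<Longrightarrow> Bs \<in> ({..<n} - A) \<rightarrow>\<^sub>E \<B> \<Longrightarrow> s \<in> S
      \<Longrightarrow> \<forall>i\<in>A. s i \<in> f ` topspace Y \<and> openin Z (U i) \<and> s i \<in> U i
      \<Longrightarrow> \<forall>i\<in>{..<n} - A. s i \<in> g ` Bs i
      \<Longrightarrow> \<exists>d\<in>D. (\<forall>i\<in>A. d i \<in> U i) \<and> (\<forall>i\<in>{..<n} - A. d i \<in> g ` Bs i)"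
proof -
  define slice where "slice n A Bs =
      {s \<in> S. (\<forall>i\<in>A. s i \<in> f ` topspace Y) \<and> (\<forall>i\<in>{..<n} - A. s i \<in> g ` Bs i)}" for n A Bs
  define Dslice where "Dslice n A Bs =
      (SOME D. countable D \<and> D \<subseteq> slice n A Bs \<and> coordinatewise_dense Z A (slice n A Bs) D)" for n A Bs
  have Dslice: "countable (Dslice n A Bs) \<and> Dslice n A Bs \<subseteq> slice n A Bs \<and>
      coordinatewise_dense Z A (slice n A Bs) (Dslice n A Bs)" if "A \<subseteq> {..<n}" for n A Bs
    unfolding Dslice_def
  proof (rule someI_ex, rule hereditarily_separable_power_coordinatewise_dense[OF hs f])
    show "finite A"
      using that finite_subset by blast
    show "\<And>s i. s \<in> slice n A Bs \<Longrightarrow> i \<in> A \<Longrightarrow> s i \<in> f ` topspace Y"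
      by (simp add: slice_def)
  qed
  define D where "D = (\<Union>n. \<Union>A\<in>Pow {..<n}. \<Union>Bs\<in>({..<n} - A) \<rightarrow>\<^sub>E \<B>. Dslice n A Bs)"
  have "countable D"
    unfolding D_def by (rule countable_UN_slices[OF \<open>countable \<B>\<close>]) (use Dslice in blast)
  moreover have "D \<subseteq> S"
  proof -
    have "Dslice n A Bs \<subseteq> S" if "A \<subseteq> {..<n}" for n A Bs
      using Dslice[OF that] by (auto simp: slice_def)
    then show ?thesis
      unfolding D_def by blast
  qed
  moreover have "\<exists>d\<in>D. (\<forall>i\<in>A. d i \<in> U i) \<and> (\<forall>i\<in>{..<n} - A. d i \<in> g ` Bs i)"
    if A: "A \<subseteq> {..<n}" and Bs: "Bs \<in> ({..<n} - A) \<rightarrow>\<^sub>E \<B>" and "s \<in> S"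
      and sA: "\<forall>i\<in>A. s i \<in> f ` topspace Y \<and> openin Z (U i) \<and> s i \<in> U i"
      and sBs: "\<forall>i\<in>{..<n} - A. s i \<in> g ` Bs i" for n A Bs s U
  proof -
    have "s \<in> slice n A Bs"
      using \<open>s \<in> S\<close> sA sBs by (simp add: slice_def)
    then obtain d where d: "d \<in> Dslice n A Bs" "\<forall>i\<in>A. d i \<in> U i"
      using Dslice[OF A] sA unfolding coordinatewise_dense_def by blast
    have "d \<in> slice n A Bs"
      using Dslice[OF A] d(1) by blast
    moreover have "d \<in> D"
      unfolding D_def using A Bs d(1) by blast
    ultimately show ?thesis
      using d(2) by (intro bexI[of _ d]) (auto simp: slice_def)
  qed
  ultimately show thesis
    by (rule that)
qed

lemma hereditarily_separable_countable_power_union: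
  fixes f :: "'b \<Rightarrow> 'c" and g :: "'a \<Rightarrow> 'c"
  assumes hs: "hereditarily_separable (countable_power Y)" and "second_countable X"
    and f: "continuous_map Y Z f" and g: "continuous_map X Z g"
    and cover: "topspace Z \<subseteq> f ` topspace Y \<union> g ` topspace X"
  shows "hereditarily_separable (countable_power Z)"
  unfolding hereditarily_separable_def
proof (intro allI impI)
  fix S assume S: "S \<subseteq> topspace (countable_power Z)"
  obtain \<B> where "countable \<B>"
    and base: "\<forall>U x. openin X U \<and> x \<in> U \<longrightarrow> (\<exists>B\<in>\<B>. x \<in> B \<and> B \<subseteq> U)"
    using assms(2) unfolding second_countable_def by blast
  show "separable_space (subtopology (countable_power Z) S)"
  proof (rule countable_dense_subset_of_power_slices[OF hs f \<open>countable \<B>\<close>, where S = S and g = g])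
    fix D assume "countable D" "D \<subseteq> S" and D: "\<And>n A Bs s U. A \<subseteq> {..<n}
      \<Longrightarrow> Bs \<in> ({..<n} - A) \<rightarrow>\<^sub>E \<B> \<Longrightarrow> s \<in> S
      \<Longrightarrow> \<forall>i\<in>A. s i \<in> f ` topspace Y \<and> openin Z (U i) \<and> s i \<in> U i
      \<Longrightarrow> \<forall>i\<in>{..<n} - A. s i \<in> g ` Bs i
      \<Longrightarrow> \<exists>d\<in>D. (\<forall>i\<in>A. d i \<in> U i) \<and> (\<forall>i\<in>{..<n} - A. d i \<in> g ` Bs i)"
    show ?thesis
    proof (rule separable_space_subtopologyI[OF \<open>countable D\<close> \<open>D \<subseteq> S\<close>])
      fix s W assume "s \<in> S" and "openin (countable_power Z) W" "s \<in> W"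
      from \<open>openin (countable_power Z) W\<close> \<open>s \<in> W\<close> show "D \<inter> W \<noteq> {}"
      proof (rule countable_power_open_refine_to_slice[OF g cover base])
        fix n A Bs U assume A: "A \<subseteq> {..<n}" and Bs: "Bs \<in> ({..<n} - A) \<rightarrow>\<^sub>E \<B>"
          and sA: "\<And>i. i \<in> A \<Longrightarrow> s i \<in> f ` topspace Y \<and> openin Z (U i) \<and> s i \<in> U i"
          and sBs: "\<And>i. i \<in> {..<n} - A \<Longrightarrow> s i \<in> g ` Bs i"
          and inW: "\<And>t. t \<in> topspace (countable_power Z) \<Longrightarrow> (\<And>i. i \<in> A \<Longrightarrow> t i \<in> U i)
                    \<Longrightarrow> (\<And>i. i \<in> {..<n} - A \<Longrightarrow> t i \<in> g ` Bs i) \<Longrightarrow> t \<in> W"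
        have "\<exists>d\<in>D. (\<forall>i\<in>A. d i \<in> U i) \<and> (\<forall>i\<in>{..<n} - A. d i \<in> g ` Bs i)"
          by (rule D[OF A Bs \<open>s \<in> S\<close>]) (use sA sBs in auto)
        then obtain d where d: "d \<in> D" "\<forall>i\<in>A. d i \<in> U i" "\<forall>i\<in>{..<n} - A. d i \<in> g ` Bs i"
          by blast
        have "d \<in> topspace (countable_power Z)"
          using \<open>d \<in> D\<close> \<open>D \<subseteq> S\<close> S by blast
        then have "d \<in> W"
          by (rule inW) (use d in auto)
        with \<open>d \<in> D\<close> show "D \<inter> W \<noteq> {}"
          by blast
      qed
    qed
  qed
qed

section \<open>The adjunction space\<close>

lemma bracket_set_mono:
  "U \<subseteq> U' \<Longrightarrow> K' \<subseteq> K \<Longrightarrow> bracket_set Y phi U K \<subseteq> bracket_set Y phi U' K'"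
  by (auto simp: bracket_set_def)

lemma bracket_set_shrink:
  assumes "V \<subseteq> L"
  shows "bracket_set Y phi (U - phi ` (K - V)) L \<subseteq> bracket_set Y phi U K"
  using assms by (auto simp: bracket_set_def)

locale adjunction_space =
  fixes X :: "'a topology" and Y :: "'b topology" and phi :: "'b \<Rightarrow> 'a"
  assumes Hausdorff_Y: "Hausdorff_space Y" and continuous_phi: "continuous_map Y X phi"
begin

abbreviation Z :: "('b + 'a) topology"
  where "Z \<equiv> adj_space Y X phi"

definition adj_basis :: "('b + 'a) set set"
  where "adj_basis = {Inl ` V | V. openin Y V} \<union>
                     {bracket_set Y phi U K | U K. openin X U \<and> compactin Y K}"

lemma Inl_image_in_adj_basis: "openin Y V \<Longrightarrow> Inl ` V \<in> adj_basis"
  unfolding adj_basis_def by blast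

lemma bracket_set_in_adj_basis:
  "openin X U \<Longrightarrow> compactin Y K \<Longrightarrow> bracket_set Y phi U K \<in> adj_basis"
  unfolding adj_basis_def by blast

lemma adj_basisE:
  assumes "B \<in> adj_basis"
  obtains (Inl) V where "openin Y V" "B = Inl ` V"
    | (bracket) U K where "openin X U" "compactin Y K" "B = bracket_set Y phi U K"
  using assms unfolding adj_basis_def by blast

lemma adj_space_eq: "Z = topology_generated_by adj_basis"
  by (simp add: adj_space_def adj_basis_def)

lemma openin_adj_space_Inl: "openin Y V \<Longrightarrow> openin Z (Inl ` V)"
  unfolding adj_space_eq by (intro topology_generated_by_Basis Inl_image_in_adj_basis)

lemma openin_adj_space_bracket_set:
  "openin X U \<Longrightarrow> compactin Y K \<Longrightarrow> openin Z (bracket_set Y phi U K)"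
  unfolding adj_space_eq by (intro topology_generated_by_Basis bracket_set_in_adj_basis)

lemma openin_phi_preimage_diff_compact:
  "openin X U \<Longrightarrow> compactin Y K \<Longrightarrow> openin Y ({y \<in> topspace Y. phi y \<in> U} - K)"
  by (intro openin_diff openin_continuous_map_preimage[OF continuous_phi]
      compactin_imp_closedin[OF Hausdorff_Y])

lemma bracket_set_topspace:
  "bracket_set Y phi (topspace X) K = Inr ` topspace X \<union> Inl ` (topspace Y - K)"
  using continuous_map_image_subset_topspace[OF continuous_phi] by (auto simp: bracket_set_def)

lemma topspace_adj_space: "topspace Z = Inl ` topspace Y \<union> Inr ` topspace X"
proof -
  have "B \<subseteq> Inl ` topspace Y \<union> Inr ` topspace X" if "B \<in> adj_basis" for B
    using that by (cases rule: adj_basisE) (auto simp: bracket_set_def dest!: openin_subset)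
  moreover have "Inl ` topspace Y \<union> Inr ` topspace X \<subseteq> \<Union>adj_basis"
    using bracket_set_in_adj_basis[of "topspace X" "{}"] bracket_set_topspace by auto
  ultimately show ?thesis
    unfolding adj_space_eq by auto
qed

lemma Int_in_adj_basis:
  assumes "B1 \<in> adj_basis" and "B2 \<in> adj_basis"
  shows "B1 \<inter> B2 \<in> adj_basis"
proof -
  have Inl_bracket: "Inl ` V \<inter> bracket_set Y phi U K \<in> adj_basis"
    if "openin Y V" "openin X U" "compactin Y K" for V U K
  proof -
    have "Inl ` V \<inter> bracket_set Y phi U K = Inl ` (V \<inter> ({y \<in> topspace Y. phi y \<in> U} - K))"
      by (auto simp: bracket_set_def)
    then show ?thesis
      using that openin_phi_preimage_diff_compact by (simp add: Inl_image_in_adj_basis openin_Int)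
  qed
  show ?thesis
    using assms(1)
  proof (cases rule: adj_basisE)
    case (Inl V1)
    show ?thesis
      using assms(2)
    proof (cases rule: adj_basisE)
      case (Inl V2)
      then have "B1 \<inter> B2 = Inl ` (V1 \<inter> V2)"
        using \<open>B1 = Inl ` V1\<close> by auto
      then show ?thesis
        using \<open>openin Y V1\<close> \<open>openin Y V2\<close> by (simp add: Inl_image_in_adj_basis openin_Int)
    next
      case bracket
      then show ?thesis
        using Inl_bracket Inl by simp
    qed
  next
    case (bracket U1 K1)
    note B1 = this
    show ?thesis
      using assms(2)
    proof (cases rule: adj_basisE)
      case Inl
      then show ?thesis
        using Inl_bracket B1 by (simp add: Int_commute)
    next
      case (bracket U2 K2)
      then have "B1 \<inter> B2 = bracket_set Y phi (U1 \<inter> U2) (K1 \<union> K2)"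
        using B1 by (auto simp: bracket_set_def)
      then show ?thesis
        using B1 bracket by (simp add: bracket_set_in_adj_basis compactin_Un openin_Int)
    qed
  qed
qed

lemma adj_basis_neighbourhood:
  assumes "openin Z W" and "z \<in> W"
  shows "\<exists>B\<in>adj_basis. z \<in> B \<and> B \<subseteq> W"
proof -
  have "generate_topology_on adj_basis W"
    using assms(1) adj_space_eq openin_topology_generated_by by metis
  then show ?thesis
    using assms(2)
  proof (induction arbitrary: z)
    case Empty
    then show ?case by simp
  next
    case (Int a b)
    then obtain B1 B2 where B1: "B1 \<in> adj_basis" "z \<in> B1" "B1 \<subseteq> a"
      and B2: "B2 \<in> adj_basis" "z \<in> B2" "B2 \<subseteq> b"
      by blast
    have "B1 \<inter> B2 \<in> adj_basis"
      using Int_in_adj_basis[OF B1(1) B2(1)] .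
    with B1 B2 show ?case
      by blast
  next
    case (UN K)
    then obtain k where "k \<in> K" "z \<in> k"
      by blast
    then show ?case
      using UN.IH[of k z] by blast
  next
    case (Basis s)
    then show ?case by blast
  qed
qed

lemma bracket_set_neighbourhood_of_Inr:
  assumes "openin Z W" and "Inr x \<in> W"
  obtains U K where "openin X U" "compactin Y K" "x \<in> U" "bracket_set Y phi U K \<subseteq> W"
proof -
  obtain B where B: "B \<in> adj_basis" "Inr x \<in> B" "B \<subseteq> W"
    using adj_basis_neighbourhood[OF assms] by blast
  from B(1) show thesis
  proof (cases rule: adj_basisE)
    case Inl
    then show ?thesis
      using B(2) by auto
  next
    case bracket
    then show ?thesis
      using that B(2,3) by (auto simp: bracket_set_def)
  qed
qed

lemma continuous_map_Inl_adj_space: "continuous_map Y Z Inl"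
  unfolding adj_space_eq
proof (rule continuous_on_generated_topo)
  fix B assume "B \<in> adj_basis"
  then show "openin Y (Inl -` B \<inter> topspace Y)"
  proof (cases rule: adj_basisE)
    case (Inl V)
    then have "Inl -` B \<inter> topspace Y = V"
      using openin_subset[of Y V] by auto
    then show ?thesis
      using Inl by simp
  next
    case (bracket U K)
    then have "Inl -` B \<inter> topspace Y = {y \<in> topspace Y. phi y \<in> U} - K"
      by (auto simp: bracket_set_def)
    then show ?thesis
      using bracket openin_phi_preimage_diff_compact by simp
  qed
qed (use topspace_adj_space adj_space_eq in auto)

lemma continuous_map_Inr_adj_space: "continuous_map X Z Inr"
  unfolding adj_space_eq
proof (rule continuous_on_generated_topo)
  fix B assume "B \<in> adj_basis"
  then show "openin X (Inr -` B \<inter> topspace X)"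
  proof (cases rule: adj_basisE)
    case Inl
    then have "Inr -` B \<inter> topspace X = {}"
      by auto
    then show ?thesis
      by simp
  next
    case (bracket U K)
    then have "Inr -` B \<inter> topspace X = U"
      using openin_subset by (auto simp: bracket_set_def)
    then show ?thesis
      using bracket by simp
  qed
qed (use topspace_adj_space adj_space_eq in auto)

lemma closedin_adj_space_Inl_compact:
  assumes "compactin Y C"
  shows "closedin Z (Inl ` C)"
proof -
  have "C \<subseteq> topspace Y"
    using assms compactin_subset_topspace by blast
  then have "topspace Z - Inl ` C = bracket_set Y phi (topspace X) C"
    by (auto simp: topspace_adj_space bracket_set_topspace)
  then show ?thesis
    using openin_adj_space_bracket_set[OF openin_topspace assms] \<open>C \<subseteq> topspace Y\<close>
    by (simp add: closedin_def topspace_adj_space image_mono le_supI1)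
qed

lemma closedin_adj_space_bracket_set:
  assumes "closedin X C" and "openin Y K"
  shows "closedin Z (bracket_set Y phi C K)"
proof -
  have "topspace Z - bracket_set Y phi C K = bracket_set Y phi (topspace X - C) {} \<union> Inl ` K"
  proof (intro set_eqI)
    fix z
    show "z \<in> topspace Z - bracket_set Y phi C K \<longleftrightarrow> z \<in> bracket_set Y phi (topspace X - C) {} \<union> Inl ` K"
      using openin_subset[OF assms(2)] continuous_map_image_subset_topspace[OF continuous_phi]
      by (cases z) (auto simp: topspace_adj_space bracket_set_def inj_image_mem_iff)
  qed
  moreover have "openin X (topspace X - C)"
    using assms(1) by (simp add: openin_diff)
  ultimately have "openin Z (topspace Z - bracket_set Y phi C K)"
    using openin_adj_space_bracket_set openin_adj_space_Inl[OF assms(2)] by auto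
  moreover have "bracket_set Y phi C K \<subseteq> topspace Z"
    using closedin_subset[OF assms(1)] by (auto simp: topspace_adj_space bracket_set_def)
  ultimately show ?thesis
    by (simp add: closedin_def)
qed

lemma embedding_map_Inl_adj_space: "embedding_map Y Z Inl"
proof (rule injective_open_imp_embedding_map)
  show "open_map Y Z Inl"
    by (simp add: open_map_def openin_adj_space_Inl)
qed (simp_all add: continuous_map_Inl_adj_space)

lemma closed_map_Inr_adj_space: "closed_map X Z Inr"
  unfolding closed_map_def
proof (intro allI impI)
  fix C assume "closedin X C"
  moreover have "Inr ` C = bracket_set Y phi C (topspace Y)"
    by (auto simp: bracket_set_def)
  ultimately show "closedin Z (Inr ` C)"
    by (simp add: closedin_adj_space_bracket_set)
qed

lemma embedding_map_Inr_adj_space: "embedding_map X Z Inr"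
  by (rule injective_closed_imp_embedding_map)
     (simp_all add: continuous_map_Inr_adj_space closed_map_Inr_adj_space)

lemma Hausdorff_adj_space:
  assumes "Hausdorff_space X" and "locally_compact_space Y"
  shows "Hausdorff_space Z"
proof -
  define separated where "separated z w \<longleftrightarrow>
      (\<exists>U V. openin Z U \<and> openin Z V \<and> z \<in> U \<and> w \<in> V \<and> disjnt U V)" for z w
  have separatedI: "separated z w"
    if "openin Z U" "openin Z V" "z \<in> U" "w \<in> V" "disjnt U V" for z w U V
    using that unfolding separated_def by blast
  have separated_sym: "separated w z" if "separated z w" for z w
    using that unfolding separated_def by (metis disjnt_sym)
  have Inl_Inl: "separated (Inl y) (Inl y')"
    if yy': "y \<in> topspace Y" "y' \<in> topspace Y" "y \<noteq> y'" for y y'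
  proof -
    obtain U V where UV: "openin Y U" "openin Y V" "y \<in> U" "y' \<in> V" "disjnt U V"
      using Hausdorff_Y yy' unfolding Hausdorff_space_def by blast
    show ?thesis
      by (rule separatedI[of "Inl ` U" "Inl ` V"]) (use UV in \<open>auto simp: openin_adj_space_Inl disjnt_def\<close>)
  qed
  have Inl_Inr: "separated (Inl y) (Inr x)" if y: "y \<in> topspace Y" and x: "x \<in> topspace X" for y x
  proof -
    obtain U K where UK: "openin Y U" "compactin Y K" "y \<in> U" "U \<subseteq> K"
      using assms(2) y unfolding locally_compact_space_def by blast
    show ?thesis
      by (rule separatedI[of "Inl ` U" "bracket_set Y phi (topspace X) K"])
         (use UK x openin_adj_space_bracket_set[OF openin_topspace UK(2)] in
            \<open>auto simp: openin_adj_space_Inl bracket_set_def disjnt_def\<close>)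
  qed
  have Inr_Inr: "separated (Inr x) (Inr x')"
    if xx': "x \<in> topspace X" "x' \<in> topspace X" "x \<noteq> x'" for x x'
  proof -
    obtain U V where UV: "openin X U" "openin X V" "x \<in> U" "x' \<in> V" "disjnt U V"
      using assms(1) xx' unfolding Hausdorff_space_def by blast
    show ?thesis
      by (rule separatedI[of "bracket_set Y phi U {}" "bracket_set Y phi V {}"])
         (use UV openin_adj_space_bracket_set[OF UV(1) compactin_empty]
            openin_adj_space_bracket_set[OF UV(2) compactin_empty] in
            \<open>auto simp: bracket_set_def disjnt_def\<close>)
  qed
  have "separated z w" if "z \<in> topspace Z" "w \<in> topspace Z" "z \<noteq> w" for z w
    using that unfolding topspace_adj_space
    by (elim UnE imageE) (auto intro: Inl_Inl Inl_Inr Inr_Inr separated_sym[OF Inl_Inr])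
  then show ?thesis
    unfolding Hausdorff_space_def separated_def by blast
qed

lemma compactin_outside_open_superset:
  assumes "compact_space X" and "openin Z W" and "Inr ` topspace X \<subseteq> W"
  shows "compactin Y {y \<in> topspace Y. Inl y \<notin> W}"
proof -
  define \<V> where "\<V> = {U. openin X U \<and> (\<exists>K. compactin Y K \<and> bracket_set Y phi U K \<subseteq> W)}"
  have "x \<in> \<Union>\<V>" if x: "x \<in> topspace X" for x
  proof (rule bracket_set_neighbourhood_of_Inr[OF assms(2)])
    show "Inr x \<in> W"
      using assms(3) x by blast
  qed (unfold \<V>_def, blast)
  then have "topspace X \<subseteq> \<Union>\<V>"
    by blast
  moreover have "openin X U" if "U \<in> \<V>" for U
    using that by (simp add: \<V>_def)
  ultimately obtain \<F> where "finite \<F>" "\<F> \<subseteq> \<V>" and cover: "topspace X \<subseteq> \<Union>\<F>"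
    using compactinD[OF assms(1)[unfolded compact_space_def]] by meson
  then have "\<forall>U\<in>\<F>. \<exists>K. compactin Y K \<and> bracket_set Y phi U K \<subseteq> W"
    unfolding \<V>_def by blast
  then obtain K where K: "\<forall>U\<in>\<F>. compactin Y (K U) \<and> bracket_set Y phi U (K U) \<subseteq> W"
    by (rule bchoice[elim_format]) blast
  have "{y \<in> topspace Y. Inl y \<notin> W} \<subseteq> \<Union>(K ` \<F>)"
  proof
    fix y assume y: "y \<in> {y \<in> topspace Y. Inl y \<notin> W}"
    then obtain U where "U \<in> \<F>" "phi y \<in> U"
      using cover continuous_map_image_subset_topspace[OF continuous_phi] by blast
    moreover have "Inl y \<notin> bracket_set Y phi U (K U)"
      using y K \<open>U \<in> \<F>\<close> by blast
    ultimately show "y \<in> \<Union>(K ` \<F>)"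
      using y by (auto simp: bracket_set_def)
  qed
  moreover have "compactin Y (\<Union>(K ` \<F>))"
    using \<open>finite \<F>\<close> K by (intro compactin_Union) auto
  moreover have "closedin Y {y \<in> topspace Y. Inl y \<notin> W}"
  proof -
    have "topspace Y - {y \<in> topspace Y. Inl y \<notin> W} = {y \<in> topspace Y. Inl y \<in> W}"
      by blast
    then show ?thesis
      using openin_continuous_map_preimage[OF continuous_map_Inl_adj_space assms(2)]
      by (simp add: closedin_def)
  qed
  ultimately show ?thesis
    using closed_compactin by blast
qed

lemma compact_space_adj_space:
  assumes "compact_space X"
  shows "compact_space Z"
  unfolding compact_space_def compactin_def
proof (intro conjI allI impI)
  show "topspace Z \<subseteq> topspace Z"
    by simp
  fix \<U> assume \<U>: "(\<forall>U\<in>\<U>. openin Z U) \<and> topspace Z \<subseteq> \<Union>\<U>"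
  then have open_\<U>: "\<And>U. U \<in> \<U> \<Longrightarrow> openin Z U"
    by blast
  have "compactin Z (Inr ` topspace X)"
    using image_compactin[OF assms[unfolded compact_space_def] continuous_map_Inr_adj_space] .
  moreover have "Inr ` topspace X \<subseteq> \<Union>\<U>"
    using \<U> topspace_adj_space by auto
  ultimately have "\<exists>\<F>. finite \<F> \<and> \<F> \<subseteq> \<U> \<and> Inr ` topspace X \<subseteq> \<Union>\<F>"
    using compactinD[OF _ open_\<U>] by blast
  then obtain \<F>\<^sub>1 where "finite \<F>\<^sub>1" "\<F>\<^sub>1 \<subseteq> \<U>" and X_cover: "Inr ` topspace X \<subseteq> \<Union>\<F>\<^sub>1"
    by blast
  define C where "C = {y \<in> topspace Y. Inl y \<notin> \<Union>\<F>\<^sub>1}"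
  have "openin Z (\<Union>\<F>\<^sub>1)"
    using open_\<U> \<open>\<F>\<^sub>1 \<subseteq> \<U>\<close> by blast
  then have "compactin Y C"
    unfolding C_def by (rule compactin_outside_open_superset[OF assms _ X_cover])
  then have "compactin Z (Inl ` C)"
    using image_compactin[OF _ continuous_map_Inl_adj_space] by blast
  moreover have "Inl ` C \<subseteq> \<Union>\<U>"
    using \<U> by (auto simp: C_def topspace_adj_space)
  ultimately have "\<exists>\<F>. finite \<F> \<and> \<F> \<subseteq> \<U> \<and> Inl ` C \<subseteq> \<Union>\<F>"
    using compactinD[OF _ open_\<U>] by blast
  then obtain \<F>\<^sub>2 where "finite \<F>\<^sub>2" "\<F>\<^sub>2 \<subseteq> \<U>" and C_cover: "Inl ` C \<subseteq> \<Union>\<F>\<^sub>2"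
    by blast
  have "topspace Z \<subseteq> \<Union>\<F>\<^sub>1 \<union> Inl ` C"
    using X_cover by (auto simp: topspace_adj_space C_def)
  then have "topspace Z \<subseteq> \<Union>(\<F>\<^sub>1 \<union> \<F>\<^sub>2)"
    using C_cover by blast
  with \<open>finite \<F>\<^sub>1\<close> \<open>finite \<F>\<^sub>2\<close> \<open>\<F>\<^sub>1 \<subseteq> \<U>\<close> \<open>\<F>\<^sub>2 \<subseteq> \<U>\<close>
  show "\<exists>\<F>. finite \<F> \<and> \<F> \<subseteq> \<U> \<and> topspace Z \<subseteq> \<Union>\<F>"
    by (intro exI[of _ "\<F>\<^sub>1 \<union> \<F>\<^sub>2"]) auto
qed

lemma bracket_set_neighbourhood_shrink:
  assumes "Hausdorff_space X" and "openin Y V" and "V \<subseteq> L"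
    and fibre: "{y \<in> topspace Y. phi y = x} \<subseteq> V"
    and U: "openin X U" and K: "compactin Y K" and "x \<in> U"
  obtains U' where "openin X U'" "x \<in> U'" "bracket_set Y phi U' L \<subseteq> bracket_set Y phi U K"
proof
  have "closedin Y (K - V)"
    using compactin_imp_closedin[OF Hausdorff_Y K] assms(2) by (rule closedin_diff)
  then have "compactin Y (K - V)"
    using closed_compactin[OF K] by blast
  then have "closedin X (phi ` (K - V))"
    using image_compactin[OF _ continuous_phi] compactin_imp_closedin[OF assms(1)] by blast
  with U show "openin X (U - phi ` (K - V))"
    by (rule openin_diff)
  have "x \<notin> phi ` (K - V)"
    using fibre compactin_subset_topspace[OF K] by blast
  then show "x \<in> U - phi ` (K - V)"
    using \<open>x \<in> U\<close> by blast
  show "bracket_set Y phi (U - phi ` (K - V)) L \<subseteq> bracket_set Y phi U K"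
    using assms(3) by (rule bracket_set_shrink)
qed

lemma Inl_countable_neighbourhood_base:
  assumes "first_countable Y" and "y \<in> topspace Y"
  shows "\<exists>\<B>. countable \<B> \<and> (\<forall>V\<in>\<B>. openin Z V) \<and>
           (\<forall>W. openin Z W \<and> Inl y \<in> W \<longrightarrow> (\<exists>V\<in>\<B>. Inl y \<in> V \<and> V \<subseteq> W))"
proof -
  obtain \<B> where \<B>: "countable \<B>" "\<forall>V\<in>\<B>. openin Y V"
    "\<forall>U. openin Y U \<and> y \<in> U \<longrightarrow> (\<exists>V\<in>\<B>. y \<in> V \<and> V \<subseteq> U)"
    using assms unfolding first_countable_def by meson
  show ?thesis
  proof (rule exI[of _ "(`) Inl ` \<B>"], intro conjI allI impI)
    show "countable ((`) Inl ` \<B>)"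
      using \<B>(1) by simp
    show "\<forall>V\<in>(`) Inl ` \<B>. openin Z V"
      using \<B>(2) by (auto intro: openin_adj_space_Inl)
    fix W assume W: "openin Z W \<and> Inl y \<in> W"
    have "openin Y {y \<in> topspace Y. Inl y \<in> W}"
      using openin_continuous_map_preimage[OF continuous_map_Inl_adj_space conjunct1[OF W]] .
    moreover have "y \<in> {y \<in> topspace Y. Inl y \<in> W}"
      using assms(2) W by simp
    ultimately obtain V where "V \<in> \<B>" "y \<in> V" "V \<subseteq> {y \<in> topspace Y. Inl y \<in> W}"
      using \<B>(3) by blast
    then show "\<exists>V\<in>(`) Inl ` \<B>. Inl y \<in> V \<and> V \<subseteq> W"
      by (intro bexI[of _ "Inl ` V"]) auto
  qed
qed

lemma Inr_countable_neighbourhood_base: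
  assumes "Hausdorff_space X" and "first_countable X" and "locally_compact_space Y"
    and "x \<in> topspace X" and "compactin Y {y \<in> topspace Y. phi y = x}"
  shows "\<exists>\<B>. countable \<B> \<and> (\<forall>V\<in>\<B>. openin Z V) \<and>
           (\<forall>W. openin Z W \<and> Inr x \<in> W \<longrightarrow> (\<exists>V\<in>\<B>. Inr x \<in> V \<and> V \<subseteq> W))"
proof -
  obtain \<B> where \<B>: "countable \<B>" "\<forall>V\<in>\<B>. openin X V"
    "\<forall>U. openin X U \<and> x \<in> U \<longrightarrow> (\<exists>V\<in>\<B>. x \<in> V \<and> V \<subseteq> U)"
    using assms(2,4) unfolding first_countable_def by meson
  have "\<forall>K. compactin Y K \<longrightarrow> (\<exists>U L. openin Y U \<and> compactin Y L \<and> closedin Y L \<and> K \<subseteq> U \<and> U \<subseteq> L)"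
    using iffD1[OF locally_compact_space_compact_closed_compact[OF disjI1[OF Hausdorff_Y]] assms(3)] .
  from this[rule_format, OF assms(5)]
  obtain V L where V: "openin Y V" and L: "compactin Y L"
    and fibre: "{y \<in> topspace Y. phi y = x} \<subseteq> V" and "V \<subseteq> L"
    by blast
  show ?thesis
  proof (rule exI[of _ "(\<lambda>U. bracket_set Y phi U L) ` \<B>"], intro conjI allI impI)
    show "countable ((\<lambda>U. bracket_set Y phi U L) ` \<B>)"
      using \<B>(1) by simp
    show "\<forall>V\<in>(\<lambda>U. bracket_set Y phi U L) ` \<B>. openin Z V"
      using \<B>(2) L by (auto intro: openin_adj_space_bracket_set)
    fix W assume W: "openin Z W \<and> Inr x \<in> W"
    from bracket_set_neighbourhood_of_Inr[OF conjunct1[OF W] conjunct2[OF W]]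
    obtain U0 K where U0: "openin X U0" "compactin Y K" "x \<in> U0" "bracket_set Y phi U0 K \<subseteq> W"
      by blast
    obtain U' where U': "openin X U'" "x \<in> U'" "bracket_set Y phi U' L \<subseteq> bracket_set Y phi U0 K"
      using bracket_set_neighbourhood_shrink[OF assms(1) V \<open>V \<subseteq> L\<close> fibre U0(1,2,3)] by blast
    then obtain U where "U \<in> \<B>" "x \<in> U" "U \<subseteq> U'"
      using \<B>(3) by blast
    then have "Inr x \<in> bracket_set Y phi U L"
      by (simp add: bracket_set_def)
    moreover have "bracket_set Y phi U L \<subseteq> W"
      using bracket_set_mono[OF \<open>U \<subseteq> U'\<close> order_refl] U'(3) U0(4) by blast
    ultimately show "\<exists>V\<in>(\<lambda>U. bracket_set Y phi U L) ` \<B>. Inr x \<in> V \<and> V \<subseteq> W"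
      using \<open>U \<in> \<B>\<close> by (intro bexI[of _ "bracket_set Y phi U L"]) auto
  qed
qed

lemma first_countable_adj_space:
  assumes "Hausdorff_space X" and "first_countable X" and "first_countable Y"
    and "locally_compact_space Y"
    and fibres: "\<And>x. x \<in> topspace X \<Longrightarrow> compactin Y {y \<in> topspace Y. phi y = x}"
  shows "first_countable Z"
  unfolding first_countable_def
proof
  fix z assume "z \<in> topspace Z"
  then consider y where "y \<in> topspace Y" "z = Inl y" | x where "x \<in> topspace X" "z = Inr x"
    using topspace_adj_space by blast
  then show "\<exists>\<B>. countable \<B> \<and> (\<forall>V\<in>\<B>. openin Z V) \<and>
               (\<forall>U. openin Z U \<and> z \<in> U \<longrightarrow> (\<exists>V\<in>\<B>. z \<in> V \<and> V \<subseteq> U))"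
  proof cases
    case (1 y)
    then show ?thesis
      using Inl_countable_neighbourhood_base[OF assms(3) 1(1)] by simp
  next
    case (2 x)
    then show ?thesis
      using Inr_countable_neighbourhood_base[OF assms(1,2,4) 2(1) fibres[OF 2(1)]] by simp
  qed
qed

lemma Inl_clopen_neighbourhood:
  assumes "locally_compact_space Y" and "Y dim_le 0" and "openin Z W" and "Inl y \<in> W"
  obtains C where "closedin Z C" "openin Z C" "Inl y \<in> C" "C \<subseteq> W"
proof -
  have "openin Y {y \<in> topspace Y. Inl y \<in> W}" "y \<in> {y \<in> topspace Y. Inl y \<in> W}"
    using openin_continuous_map_preimage[OF continuous_map_Inl_adj_space assms(3)] assms(4)
      continuous_map_Inl_adj_space openin_subset[OF assms(3)]
    by (auto simp: topspace_adj_space)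
  from locally_compact_dim_le_0_compact_open_neighbourhood[OF assms(1,2) this]
  obtain C where C: "openin Y C" "compactin Y C" "y \<in> C" "C \<subseteq> {y \<in> topspace Y. Inl y \<in> W}"
    by blast
  show thesis
  proof (rule that)
    show "closedin Z (Inl ` C)"
      using C(2) by (rule closedin_adj_space_Inl_compact)
    show "openin Z (Inl ` C)"
      using C(1) by (rule openin_adj_space_Inl)
  qed (use C in auto)
qed

lemma Inr_clopen_neighbourhood:
  assumes "X dim_le 0" and "Y dim_le 0" and "locally_compact_space Y"
    and "openin Z W" and "Inr x \<in> W"
  obtains C where "closedin Z C" "openin Z C" "Inr x \<in> C" "C \<subseteq> W"
proof -
  from bracket_set_neighbourhood_of_Inr[OF assms(4,5)]
  obtain U K where UK: "openin X U" "compactin Y K" "x \<in> U" "bracket_set Y phi U K \<subseteq> W"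
    by blast
  from dimension_le_0_clopen_neighbourhood[OF assms(1) UK(1,3)]
  obtain C where C: "closedin X C" "openin X C" "x \<in> C" "C \<subseteq> U"
    by blast
  from locally_compact_dim_le_0_compactin_subset_compact_open[OF assms(3,2) UK(2)]
  obtain K' where K': "openin Y K'" "compactin Y K'" "K \<subseteq> K'"
    by blast
  show thesis
  proof (rule that)
    show "closedin Z (bracket_set Y phi C K')"
      using C(1) K'(1) by (rule closedin_adj_space_bracket_set)
    show "openin Z (bracket_set Y phi C K')"
      using C(2) K'(2) by (rule openin_adj_space_bracket_set)
    show "Inr x \<in> bracket_set Y phi C K'"
      using C(3) by (simp add: bracket_set_def)
    show "bracket_set Y phi C K' \<subseteq> W"
      using bracket_set_mono[OF C(4) K'(3)] UK(4) by blast
  qed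
qed

lemma dimension_le_0_adj_space:
  assumes "X dim_le 0" and "Y dim_le 0" and "locally_compact_space Y"
  shows "Z dim_le 0"
proof -
  have "\<exists>C. (closedin Z C \<and> openin Z C) \<and> z \<in> C \<and> C \<subseteq> W" if W: "openin Z W" "z \<in> W" for W z
  proof (cases z)
    case (Inl y)
    from Inl_clopen_neighbourhood[OF assms(3,2) W(1) W(2)[unfolded Inl]]
    obtain C where "closedin Z C" "openin Z C" "Inl y \<in> C" "C \<subseteq> W"
      by blast
    with Inl show ?thesis
      by blast
  next
    case (Inr x)
    from Inr_clopen_neighbourhood[OF assms W(1) W(2)[unfolded Inr]]
    obtain C where "closedin Z C" "openin Z C" "Inr x \<in> C" "C \<subseteq> W"
      by blast
    with Inr show ?thesis
      by blast
  qed
  then have "neighbourhood_base_of (\<lambda>C. closedin Z C \<and> openin Z C) Z"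
    by (subst open_neighbourhood_base_of) blast+
  then show ?thesis
    by (simp add: dimension_le_0_neighbourhood_base_of_clopen)
qed

lemma hereditarily_separable_power_adj_space:
  assumes "second_countable X" and "hereditarily_separable (countable_power Y)"
  shows "hereditarily_separable (countable_power Z)"
  by (rule hereditarily_separable_countable_power_union[OF assms(2,1)
        continuous_map_Inl_adj_space continuous_map_Inr_adj_space])
     (simp add: topspace_adj_space)

end

theorem lemma3p2:
  fixes X :: "'a topology" and Y :: "'b topology" and phi :: "'b \<Rightarrow> 'a"
  assumes "Hausdorff_space X" and "Hausdorff_space Y"
    and "continuous_map Y X phi"
  defines "Z \<equiv> adj_space Y X phi"
  shows "(closedin Z (Inr ` topspace X) \<and> openin Z (Inl ` topspace Y)
          \<and> homeomorphic_map X (subtopology Z (Inr ` topspace X)) Inr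
          \<and> homeomorphic_map Y (subtopology Z (Inl ` topspace Y)) Inl)
     \<and> (locally_compact_space Y \<longrightarrow> Hausdorff_space Z)
     \<and> (compact_space X \<longrightarrow> compact_space Z)
     \<and> (first_countable X \<and> first_countable Y \<and> compact_space X \<and> locally_compact_space Y
         \<and> (\<forall>x \<in> topspace X. compactin Y {y \<in> topspace Y. phi y = x})
         \<longrightarrow> first_countable Z)
     \<and> (X dim_le 0 \<and> Y dim_le 0 \<and> compact_space X \<and> locally_compact_space Y
         \<longrightarrow> Z dim_le 0)
     \<and> (second_countable X \<and> hereditarily_separable (countable_power Y)
         \<longrightarrow> hereditarily_separable (countable_power Z))"
proof -
  interpret adjunction_space X Y phi
    using assms(2,3) by unfold_locales
  have "closedin Z (Inr ` topspace X)"
    using closed_map_Inr_adj_space unfolding Z_def closed_map_def by blast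
  moreover have "openin Z (Inl ` topspace Y)"
    unfolding Z_def by (rule openin_adj_space_Inl[OF openin_topspace])
  moreover have "homeomorphic_map X (subtopology Z (Inr ` topspace X)) Inr"
    "homeomorphic_map Y (subtopology Z (Inl ` topspace Y)) Inl"
    using embedding_map_Inr_adj_space embedding_map_Inl_adj_space
    unfolding Z_def embedding_map_def by auto
  ultimately show ?thesis
    unfolding Z_def
    using Hausdorff_adj_space[OF assms(1)] compact_space_adj_space
      first_countable_adj_space[OF assms(1)] dimension_le_0_adj_space
      hereditarily_separable_power_adj_space
    by blast
qed

end
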